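(* Let $\Theta$ be a weakly compact set of probability measures on $\mathbb{R}$ with $\lim_{N\to\infty}\sup_{\mu\in\Theta}\int|x|1_{\{|x|>N\}}d\mu=0$, and let $\mathcal{N}[\psi]=\max_{\mu\in\Theta}\mu[\psi]$ for $\psi\in C_{b,Lip}(\mathbb{R})$. Let $\varphi\in C_b^2(\mathbb{R})$ and $u(t,x):=\mathcal{N}[\varphi(x+\sqrt{t}\,\cdot)]$. Then for every $t>0$ and $x\in\mathbb{R}$ the one-sided derivatives below exist and \[\partial_t^+u(t,x)=\sup_{\mu\in\Theta_{t,x}}\int\frac{y}{2\sqrt t}\varphi'(x+\sqrt t y)\mu(dy),\qquad \partial_t^-u(t,x)=\inf_{\mu\in\Theta_{t,x}}\int\frac{y}{2\sqrt t}\varphi'(x+\sqrt t y)\mu(dy),\] \[\partial_x^+u(t,x)=\sup_{\mu\in\Theta_{t,x}}\int\varphi'(x+\sqrt t y)\mu(dy),\qquad \partial_x^-u(t,x)=\inf_{\mu\in\Theta_{t,x}}\int\varphi'(x+\sqrt t y)\mu(dy),\] where $\Theta_{t,x}=\{\mu\in\Theta:\mu[\varphi(x+\sqrt t\,\cdot)]=\mathcal{N}[\varphi(x+\sqrt t\,\cdot)]\}$. Furthermore, \[\partial_t^+u(t,x)=\lim_{\delta\downarrow0}\partial_t^+u(t+\delta,x)=\lim_{\delta\downarrow0}\partial_t^-u(t+\delta,x),\qquad \partial_t^-u(t,x)=\lim_{\delta\downarrow0}\partial_t^+u(t-\delta,x)=\lim_{\delta\downarrow0}\partial_t^-u(t-\delta,x),\]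 and similarly $\partial_x^+u(t,x)=\lim_{\delta\downarrow0}\partial_x^+u(t,x+\delta)=\lim_{\delta\downarrow0}\partial_x^-u(t,x+\delta)$ and $\partial_x^-u(t,x)=\lim_{\delta\downarrow0}\partial_x^+u(t,x-\delta)=\lim_{\delta\downarrow0}\partial_x^-u(t,x-\delta)$.
   Context: $C_{b,Lip}(\mathbb{R})$: bounded Lipschitz functions; $C_b^2(\mathbb{R})$: twice continuously differentiable functions bounded with bounded first and second derivatives; $\mu[\psi]=\int\psi\,d\mu$. One-sided derivatives: $\partial_t^+u(t,x)=\lim_{\delta\downarrow0}\frac{u(t+\delta,x)-u(t,x)}{\delta}$, $\partial_t^-u(t,x)=\lim_{\delta\downarrow0}\frac{u(t-\delta,x)-u(t,x)}{-\delta}$, and analogously $\partial_x^\pm u$ in the $x$ variable. *)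

theory Defs
  imports "HOL-Probability.Probability"
begin

text \<open>The weak topology on probability measures on R is metrizable, so compactness
  coincides with sequential compactness.\<close>
definition weakly_compact_pm :: "real measure set \<Rightarrow> bool" where
  "weakly_compact_pm \<Theta> \<longleftrightarrow>
     (\<forall>\<mu>s :: nat \<Rightarrow> real measure. (\<forall>n. \<mu>s n \<in> \<Theta>) \<longrightarrow>
        (\<exists>(r :: nat \<Rightarrow> nat) \<mu>. strict_mono r \<and> \<mu> \<in> \<Theta> \<and> weak_conv_m (\<mu>s \<circ> r) \<mu>))"

definition rderiv :: "(real \<Rightarrow> real) \<Rightarrow> real \<Rightarrow> real" where
  "rderiv f s = Lim (at_right 0) (\<lambda>h. (f (s + h) - f s) / h)"

definition lderiv :: "(real \<Rightarrow> real) \<Rightarrow> real \<Rightarrow> real" where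
  "lderiv f s = Lim (at_right 0) (\<lambda>h. (f (s - h) - f s) / (- h))"

end

(* Write v a = max over mu in Theta of mu[phi (x + a y)], so that u t x = v (sqrt t).  Both v and
   u t are upper envelopes g s = sup mu. F mu s of families F mu s = mu[phi (alpha y + s beta y)]
   with |beta y| <= 1 + |y|.  The Taylor remainder in s and the modulus of continuity of the
   s-derivative are dominated by (1 + |y|) min 1 (rho (1 + |y|)) with rho = |s' - s|, whose
   integral is small uniformly in mu because |y| is uniformly integrable; weak compactness and the
   same uniform integrability make the family of integrals and of their s-derivatives sequentially
   compact.  For such envelopes Danskin's argument shows that the right (left) derivative is the
   largest (smallest) derivative over the maximizers, and the upper semicontinuity of the set of
   maximizers makes these one-sided derivatives continuous from the corresponding side.  The time
   derivatives then follow by the chain rule through sqrt t. *)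

theory Submission
  imports Defs
begin

section \<open>One-sided limits and derivatives\<close>

lemma tendsto_at_right_shift:
  fixes f :: "real \<Rightarrow> 'a::topological_space"
  shows "(f \<longlongrightarrow> L) (at_right s) \<longleftrightarrow> ((\<lambda>h. f (s + h)) \<longlongrightarrow> L) (at_right 0)"
  by (simp add: filterlim_at_right_to_0[of f _ s] add.commute)

lemma tendsto_at_left_shift:
  fixes f :: "real \<Rightarrow> 'a::topological_space"
  shows "(f \<longlongrightarrow> L) (at_left s) \<longleftrightarrow> ((\<lambda>h. f (s - h)) \<longlongrightarrow> L) (at_right 0)"
  by (simp add: filterlim_at_left_to_right[of f _ s] filterlim_at_right_to_0[of _ _ "- s"])

lemma has_real_derivative_at_right_iff:
  "(f has_real_derivative D) (at_right s) \<longleftrightarrow> ((\<lambda>h. (f (s + h) - f s) / h) \<longlongrightarrow> D) (at_right 0)"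
  by (simp add: has_field_derivative_iff tendsto_at_right_shift[where s=s])

lemma has_real_derivative_at_left_iff:
  "(f has_real_derivative D) (at_left s) \<longleftrightarrow> ((\<lambda>h. (f (s - h) - f s) / (- h)) \<longlongrightarrow> D) (at_right 0)"
  by (simp add: has_field_derivative_iff tendsto_at_left_shift[where s=s])

lemma rderiv_eqI: "(f has_real_derivative D) (at_right s) \<Longrightarrow> rderiv f s = D"
  unfolding rderiv_def has_real_derivative_at_right_iff
  by (rule tendsto_Lim[OF trivial_limit_at_right_real])

lemma lderiv_eqI: "(f has_real_derivative D) (at_left s) \<Longrightarrow> lderiv f s = D"
  unfolding lderiv_def has_real_derivative_at_left_iff
  by (rule tendsto_Lim[OF trivial_limit_at_right_real])

lemma tendsto_abs_le_epsI:
  fixes f :: "'a \<Rightarrow> real"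
  assumes "\<And>e. e > 0 \<Longrightarrow> eventually (\<lambda>x. \<bar>f x - L\<bar> \<le> c * e) F"
  shows "(f \<longlongrightarrow> L) F"
proof (rule tendstoI)
  fix r :: real assume "r > 0"
  then have "eventually (\<lambda>x. \<bar>f x - L\<bar> \<le> c * (r / (2 * (\<bar>c\<bar> + 1)))) F"
    by (intro assms) (simp add: add_pos_nonneg)
  moreover have "c * (r / (2 * (\<bar>c\<bar> + 1))) < r"
  proof -
    have pos: "0 < 2 * (\<bar>c\<bar> + 1)" by (simp add: add_nonneg_pos)
    have "c * r \<le> \<bar>c\<bar> * r" using \<open>r > 0\<close> by (intro mult_right_mono) auto
    also have "\<dots> < r * (2 * (\<bar>c\<bar> + 1))"
    proof -
      have "0 \<le> r * \<bar>c\<bar>" using \<open>r > 0\<close> by simp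
      moreover have "r * (2 * (\<bar>c\<bar> + 1)) = 2 * (r * \<bar>c\<bar>) + 2 * r" "\<bar>c\<bar> * r = r * \<bar>c\<bar>"
        by (simp_all add: algebra_simps)
      ultimately show ?thesis using \<open>r > 0\<close> by linarith
    qed
    finally have "c * r / (2 * (\<bar>c\<bar> + 1)) < r"
      by (subst pos_divide_less_eq[OF pos])
    then show ?thesis by simp
  qed
  ultimately show "eventually (\<lambda>x. dist (f x) L < r) F"
    by (auto elim: eventually_mono simp: dist_real_def)
qed

lemma cSUP_divide:
  fixes f :: "'a \<Rightarrow> real"
  assumes "A \<noteq> {}" "bdd_above (f ` A)" "c > 0"
  shows "(SUP x\<in>A. f x) / c = (SUP x\<in>A. f x / c)"
proof -
  have "mono (\<lambda>z. z / c)" by (intro monoI divide_right_mono) (use assms(3) in auto)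
  moreover have "continuous (at_left (Sup (f ` A))) (\<lambda>z. z / c)"
    using assms(3) by (intro continuous_intros) auto
  ultimately show ?thesis using assms(1,2) by (subst continuous_at_Sup_mono) (auto simp: image_image)
qed

lemma cINF_divide:
  fixes f :: "'a \<Rightarrow> real"
  assumes "A \<noteq> {}" "bdd_below (f ` A)" "c > 0"
  shows "(INF x\<in>A. f x) / c = (INF x\<in>A. f x / c)"
proof -
  have "mono (\<lambda>z. z / c)" by (intro monoI divide_right_mono) (use assms(3) in auto)
  moreover have "continuous (at_right (Inf (f ` A))) (\<lambda>z. z / c)"
    using assms(3) by (intro continuous_intros) auto
  ultimately show ?thesis using assms(1,2) by (subst continuous_at_Inf_mono) (auto simp: image_image)
qed

lemma tendsto_sqrt_quotient_compose:
  assumes "(f \<longlongrightarrow> L) (at (sqrt t) within S)" "filterlim sqrt (at (sqrt t) within S) net" "t > 0"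
  shows "((\<lambda>r. f (sqrt r) / (2 * sqrt r)) \<longlongrightarrow> L / (2 * sqrt t)) net"
proof -
  have "(sqrt \<longlongrightarrow> sqrt t) net" using assms(2) by (simp add: filterlim_at)
  then show ?thesis
    using tendsto_divide[OF filterlim_compose[OF assms(1,2)] tendsto_mult[OF tendsto_const]] assms(3)
    by simp
qed

lemma has_real_derivative_at_right_compose:
  fixes f \<psi> :: "real \<Rightarrow> real"
  assumes "(f has_real_derivative Df) (at_right (\<psi> s))" "(\<psi> has_real_derivative D\<psi>) (at s)"
    and "strict_mono \<psi>"
  shows "((\<lambda>r. f (\<psi> r)) has_real_derivative Df * D\<psi>) (at_right s)"
proof -
  have "\<psi> ` {s<..} \<subseteq> {\<psi> s<..}" using assms(3) by (auto simp: strict_mono_less)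
  with assms(1) have "(f has_real_derivative Df) (at (\<psi> s) within \<psi> ` {s<..})"
    by (rule has_field_derivative_subset)
  from DERIV_image_chain[OF this has_field_derivative_at_within[OF assms(2)]] show ?thesis
    by (simp add: o_def)
qed

lemma has_real_derivative_at_left_compose:
  fixes f \<psi> :: "real \<Rightarrow> real"
  assumes "(f has_real_derivative Df) (at_left (\<psi> s))" "(\<psi> has_real_derivative D\<psi>) (at s)"
    and "strict_mono \<psi>"
  shows "((\<lambda>r. f (\<psi> r)) has_real_derivative Df * D\<psi>) (at_left s)"
proof -
  have "\<psi> ` {..<s} \<subseteq> {..<\<psi> s}" using assms(3) by (auto simp: strict_mono_less)
  with assms(1) have "(f has_real_derivative Df) (at (\<psi> s) within \<psi> ` {..<s})"
    by (rule has_field_derivative_subset)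
  from DERIV_image_chain[OF this has_field_derivative_at_within[OF assms(2)]] show ?thesis
    by (simp add: o_def)
qed

lemma filterlim_strict_mono_at_right:
  fixes \<psi> :: "real \<Rightarrow> real"
  assumes "strict_mono \<psi>" "isCont \<psi> s"
  shows "filterlim \<psi> (at_right (\<psi> s)) (at_right s)"
  unfolding filterlim_at
proof
  show "eventually (\<lambda>x. \<psi> x \<in> {\<psi> s<..} \<and> \<psi> x \<noteq> \<psi> s) (at_right s)"
    using eventually_at_right_less[of s] by eventually_elim (use assms(1) in \<open>auto simp: strict_mono_less strict_mono_eq\<close>)
  show "(\<psi> \<longlongrightarrow> \<psi> s) (at_right s)"
    using assms(2) by (simp add: isCont_def filterlim_at_split)
qed

lemma filterlim_strict_mono_at_left:
  fixes \<psi> :: "real \<Rightarrow> real"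
  assumes "strict_mono \<psi>" "isCont \<psi> s"
  shows "filterlim \<psi> (at_left (\<psi> s)) (at_left s)"
  unfolding filterlim_at
proof
  have "eventually (\<lambda>x. x < s) (at_left s)"
    unfolding eventually_at_left_field by (intro exI[of _ "s - 1"]) auto
  then show "eventually (\<lambda>x. \<psi> x \<in> {..<\<psi> s} \<and> \<psi> x \<noteq> \<psi> s) (at_left s)"
    by eventually_elim (use assms(1) in \<open>auto simp: strict_mono_less strict_mono_eq\<close>)
  show "(\<psi> \<longlongrightarrow> \<psi> s) (at_left s)"
    using assms(2) by (simp add: isCont_def filterlim_at_split)
qed

lemma strict_mono_sqrt: "strict_mono sqrt"
  by (rule strict_monoI) (rule real_sqrt_less_mono)

section \<open>Envelopes of uniformly differentiable compact families\<close>

lemma closed_image_seq_compact: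
  assumes "\<And>\<mu>s. (\<And>n. \<mu>s n \<in> A) \<Longrightarrow>
             \<exists>(r :: nat \<Rightarrow> nat) \<mu>. strict_mono r \<and> \<mu> \<in> A \<and> (\<lambda>n. f (\<mu>s (r n))) \<longlonglongrightarrow> f \<mu>"
  shows "closed (f ` A :: real set)"
  unfolding closed_sequential_limits
proof (intro allI impI, elim conjE)
  fix x l assume "\<forall>n. x n \<in> f ` A" and x: "x \<longlonglongrightarrow> l"
  then have "\<forall>n. \<exists>\<mu>. \<mu> \<in> A \<and> x n = f \<mu>" by blast
  then obtain \<mu>s where \<mu>s: "\<And>n. \<mu>s n \<in> A" "\<And>n. x n = f (\<mu>s n)" by metis
  then obtain r \<mu> where r: "strict_mono r" "\<mu> \<in> A" "(\<lambda>n. f (\<mu>s (r n))) \<longlonglongrightarrow> f \<mu>"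
    using assms by blast
  have "(\<lambda>n. f (\<mu>s (r n))) \<longlonglongrightarrow> l"
    using LIMSEQ_subseq_LIMSEQ[OF x r(1)] by (simp add: o_def \<mu>s(2))
  with r show "l \<in> f ` A" using LIMSEQ_unique by blast
qed

locale danskin =
  fixes Th :: "'m set" and F D :: "'m \<Rightarrow> real \<Rightarrow> real" and g :: "real \<Rightarrow> real"
  assumes nonempty: "Th \<noteq> {}"
    and F_bdd_above: "\<And>s. bdd_above ((\<lambda>\<mu>. F \<mu> s) ` Th)"
    and D_bounded: "\<And>s. \<exists>B. \<forall>\<mu>\<in>Th. \<bar>D \<mu> s\<bar> \<le> B"
    and uniform_deriv: "\<And>e. e > 0 \<Longrightarrow> \<exists>d>0. \<forall>\<mu>\<in>Th. \<forall>s s'. \<bar>s' - s\<bar> < d \<longrightarrow>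
          \<bar>F \<mu> s' - F \<mu> s - (s' - s) * D \<mu> s\<bar> \<le> e * \<bar>s' - s\<bar>"
    and D_equicont: "\<And>e. e > 0 \<Longrightarrow> \<exists>d>0. \<forall>\<mu>\<in>Th. \<forall>s s'. \<bar>s' - s\<bar> < d \<longrightarrow>
          \<bar>D \<mu> s' - D \<mu> s\<bar> \<le> e"
    and seq_compact: "\<And>\<mu>s s. (\<And>n. \<mu>s n \<in> Th) \<Longrightarrow> \<exists>(r :: nat \<Rightarrow> nat) \<mu>. strict_mono r \<and> \<mu> \<in> Th \<and>
          (\<lambda>n. F (\<mu>s (r n)) s) \<longlonglongrightarrow> F \<mu> s \<and> (\<lambda>n. D (\<mu>s (r n)) s) \<longlonglongrightarrow> D \<mu> s"
    and g_def: "\<And>s. g s = (SUP \<mu>\<in>Th. F \<mu> s)"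
begin

definition maximizers :: "real \<Rightarrow> 'm set" where
  "maximizers s = {\<mu>\<in>Th. F \<mu> s = g s}"

definition upper_deriv :: "real \<Rightarrow> real" where
  "upper_deriv s = (SUP \<mu>\<in>maximizers s. D \<mu> s)"

definition lower_deriv :: "real \<Rightarrow> real" where
  "lower_deriv s = (INF \<mu>\<in>maximizers s. D \<mu> s)"

lemma F_le_g: "\<mu> \<in> Th \<Longrightarrow> F \<mu> s \<le> g s"
  unfolding g_def by (rule cSUP_upper[OF _ F_bdd_above])

lemma g_le: "(\<And>\<mu>. \<mu> \<in> Th \<Longrightarrow> F \<mu> s \<le> c) \<Longrightarrow> g s \<le> c"
  unfolding g_def by (rule cSUP_least[OF nonempty])

lemma maximizersD: "\<mu> \<in> maximizers s \<Longrightarrow> \<mu> \<in> Th \<and> F \<mu> s = g s"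
  by (simp add: maximizers_def)

lemma maximizers_nonempty: "maximizers s \<noteq> {}"
proof -
  have "closed ((\<lambda>\<mu>. F \<mu> s) ` Th)"
  proof (rule closed_image_seq_compact)
    fix \<mu>s :: "nat \<Rightarrow> 'm" assume "\<And>n. \<mu>s n \<in> Th"
    from seq_compact[of \<mu>s s, OF this]
    show "\<exists>(r :: nat \<Rightarrow> nat) \<mu>. strict_mono r \<and> \<mu> \<in> Th \<and> (\<lambda>n. F (\<mu>s (r n)) s) \<longlonglongrightarrow> F \<mu> s"
      by blast
  qed
  then have "g s \<in> (\<lambda>\<mu>. F \<mu> s) ` Th"
    unfolding g_def by (intro closed_contains_Sup F_bdd_above) (simp add: nonempty)
  then show ?thesis by (auto simp: maximizers_def)
qed

lemma limit_in_maximizers: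
  fixes \<mu>s :: "nat \<Rightarrow> 'm"
  assumes "\<And>n. \<mu>s n \<in> Th" and "(\<lambda>n. F (\<mu>s n) s) \<longlonglongrightarrow> g s"
  shows "\<exists>(r :: nat \<Rightarrow> nat) \<mu>. strict_mono r \<and> \<mu> \<in> maximizers s \<and> (\<lambda>n. D (\<mu>s (r n)) s) \<longlonglongrightarrow> D \<mu> s"
proof -
  obtain r \<mu> where r: "strict_mono r" "\<mu> \<in> Th" "(\<lambda>n. F (\<mu>s (r n)) s) \<longlonglongrightarrow> F \<mu> s"
      "(\<lambda>n. D (\<mu>s (r n)) s) \<longlonglongrightarrow> D \<mu> s"
    using seq_compact[of \<mu>s s, OF assms(1)] by blast
  have "(\<lambda>n. F (\<mu>s (r n)) s) \<longlonglongrightarrow> g s"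
    using LIMSEQ_subseq_LIMSEQ[OF assms(2) r(1)] by (simp add: o_def)
  then have "F \<mu> s = g s" using r(3) LIMSEQ_unique by blast
  with r show ?thesis by (auto simp: maximizers_def)
qed

lemma closed_D_maximizers: "closed ((\<lambda>\<mu>. D \<mu> s) ` maximizers s)"
proof (rule closed_image_seq_compact)
  fix \<mu>s :: "nat \<Rightarrow> 'm" assume \<mu>s: "\<And>n. \<mu>s n \<in> maximizers s"
  then have "(\<lambda>n. F (\<mu>s n) s) = (\<lambda>n. g s)" by (auto dest: maximizersD)
  then show "\<exists>(r :: nat \<Rightarrow> nat) \<mu>. strict_mono r \<and> \<mu> \<in> maximizers s \<and> (\<lambda>n. D (\<mu>s (r n)) s) \<longlonglongrightarrow> D \<mu> s"
    using \<mu>s by (intro limit_in_maximizers) (auto dest: maximizersD)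
qed

lemma bounded_D_maximizers:
  "bdd_above ((\<lambda>\<mu>. D \<mu> s) ` maximizers s)" "bdd_below ((\<lambda>\<mu>. D \<mu> s) ` maximizers s)"
proof -
  obtain B where "\<forall>\<mu>\<in>Th. \<bar>D \<mu> s\<bar> \<le> B" using D_bounded by blast
  then have "\<mu> \<in> maximizers s \<Longrightarrow> - B \<le> D \<mu> s \<and> D \<mu> s \<le> B" for \<mu>
    by (auto dest!: maximizersD simp: abs_le_iff)
  then show "bdd_above ((\<lambda>\<mu>. D \<mu> s) ` maximizers s)" "bdd_below ((\<lambda>\<mu>. D \<mu> s) ` maximizers s)"
    by (fastforce intro: bdd_aboveI2)+
qed

lemma upper_deriv_attained: "\<exists>\<mu>\<in>maximizers s. D \<mu> s = upper_deriv s"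
proof -
  have "upper_deriv s \<in> (\<lambda>\<mu>. D \<mu> s) ` maximizers s"
    unfolding upper_deriv_def using maximizers_nonempty bounded_D_maximizers(1) closed_D_maximizers
    by (intro closed_contains_Sup) auto
  then show ?thesis by auto
qed

lemma lower_deriv_attained: "\<exists>\<mu>\<in>maximizers s. D \<mu> s = lower_deriv s"
proof -
  have "lower_deriv s \<in> (\<lambda>\<mu>. D \<mu> s) ` maximizers s"
    unfolding lower_deriv_def using maximizers_nonempty bounded_D_maximizers(2) closed_D_maximizers
    by (intro closed_contains_Inf) auto
  then show ?thesis by auto
qed

lemma D_le_upper_deriv: "\<mu> \<in> maximizers s \<Longrightarrow> D \<mu> s \<le> upper_deriv s"
  unfolding upper_deriv_def by (rule cSUP_upper[OF _ bounded_D_maximizers(1)])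

lemma maximizer_gap:
  "\<exists>L d. d > 0 \<and> (\<forall>s' \<mu>. \<bar>s' - s\<bar> < d \<longrightarrow> \<mu> \<in> maximizers s' \<longrightarrow> g s - F \<mu> s \<le> L * \<bar>s' - s\<bar>)"
proof -
  obtain d where d: "d > 0" and
    expand: "\<And>\<mu> s'. \<mu> \<in> Th \<Longrightarrow> \<bar>s' - s\<bar> < d \<Longrightarrow> \<bar>F \<mu> s' - F \<mu> s - (s' - s) * D \<mu> s\<bar> \<le> 1 * \<bar>s' - s\<bar>"
    using uniform_deriv[of 1] by auto
  obtain B where B: "\<And>\<mu>. \<mu> \<in> Th \<Longrightarrow> \<bar>D \<mu> s\<bar> \<le> B" using D_bounded by blast
  have lip: "\<bar>F \<mu> s' - F \<mu> s\<bar> \<le> (B + 1) * \<bar>s' - s\<bar>" if "\<mu> \<in> Th" "\<bar>s' - s\<bar> < d" for \<mu> s'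
  proof -
    have "\<bar>(s' - s) * D \<mu> s\<bar> \<le> \<bar>s' - s\<bar> * B"
      unfolding abs_mult using B[OF that(1)] by (intro mult_left_mono) auto
    then show ?thesis using expand[OF that] by (simp add: algebra_simps)
  qed
  have "g s - F \<mu> s \<le> 2 * (B + 1) * \<bar>s' - s\<bar>" if "\<bar>s' - s\<bar> < d" "\<mu> \<in> maximizers s'" for s' \<mu>
  proof -
    have "g s \<le> g s' + (B + 1) * \<bar>s' - s\<bar>"
    proof (rule g_le)
      fix \<nu> assume "\<nu> \<in> Th"
      then show "F \<nu> s \<le> g s' + (B + 1) * \<bar>s' - s\<bar>"
        using lip[OF \<open>\<nu> \<in> Th\<close> that(1)] F_le_g[of \<nu> s'] by (simp add: abs_le_iff)
    qed
    moreover have "F \<mu> s' = g s'" "\<mu> \<in> Th" using that(2) by (auto dest: maximizersD)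
    ultimately show ?thesis using lip[OF _ that(1), of \<mu>] by (simp add: abs_le_iff algebra_simps)
  qed
  with d show ?thesis by blast
qed

lemma maximizers_limit:
  fixes ss :: "nat \<Rightarrow> real" and \<mu>s :: "nat \<Rightarrow> 'm"
  assumes "ss \<longlonglongrightarrow> s" and "\<And>n. \<mu>s n \<in> maximizers (ss n)"
  shows "\<exists>(r :: nat \<Rightarrow> nat) \<mu>. strict_mono r \<and> \<mu> \<in> maximizers s \<and> (\<lambda>n. D (\<mu>s (r n)) s) \<longlonglongrightarrow> D \<mu> s"
proof (rule limit_in_maximizers)
  show \<mu>s: "\<mu>s n \<in> Th" for n using assms(2) by (auto dest: maximizersD)
  obtain L d where d: "d > 0" and
    gap: "\<And>s' \<mu>. \<bar>s' - s\<bar> < d \<Longrightarrow> \<mu> \<in> maximizers s' \<Longrightarrow> g s - F \<mu> s \<le> L * \<bar>s' - s\<bar>"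
    using maximizer_gap by blast
  have "g s - L * \<bar>ss n - s\<bar> \<le> F (\<mu>s n) s" if "\<bar>ss n - s\<bar> < d" for n
    using gap[OF that assms(2)] by linarith
  moreover have "eventually (\<lambda>n. \<bar>ss n - s\<bar> < d) sequentially"
    using assms(1) d by (simp add: tendsto_iff dist_real_def)
  ultimately have lower: "eventually (\<lambda>n. g s - L * \<bar>ss n - s\<bar> \<le> F (\<mu>s n) s) sequentially"
    by (simp add: eventually_mono)
  have "(\<lambda>n. g s - L * \<bar>ss n - s\<bar>) \<longlonglongrightarrow> g s - L * \<bar>s - s\<bar>"
    by (intro tendsto_intros assms(1))
  then show "(\<lambda>n. F (\<mu>s n) s) \<longlonglongrightarrow> g s"
    using F_le_g[OF \<mu>s] by (intro tendsto_sandwich[OF lower always_eventually _ tendsto_const]) auto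
qed

lemma D_maximizers_usc:
  assumes "e > 0"
  shows "\<exists>d>0. \<forall>s' \<mu>. \<bar>s' - s\<bar> < d \<longrightarrow> \<mu> \<in> maximizers s' \<longrightarrow> D \<mu> s \<le> upper_deriv s + e"
proof (rule ccontr)
  assume "\<not> ?thesis"
  then have "\<forall>n. \<exists>s' \<mu>. \<bar>s' - s\<bar> < 1 / Suc n \<and> \<mu> \<in> maximizers s' \<and> upper_deriv s + e < D \<mu> s"
    by (auto simp: not_le)
  then obtain ss \<mu>s where ss: "\<And>n. \<bar>ss n - s\<bar> < 1 / Suc n"
    and \<mu>s: "\<And>n. \<mu>s n \<in> maximizers (ss n)" "\<And>n. upper_deriv s + e < D (\<mu>s n) s"
    by metis
  have "(\<lambda>n. ss n - s) \<longlonglongrightarrow> 0"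
    by (rule Lim_null_comparison[OF always_eventually LIMSEQ_Suc[OF lim_inverse_n']])
      (use ss in \<open>simp add: less_imp_le\<close>)
  then have "ss \<longlonglongrightarrow> s" by (simp add: LIM_zero_iff)
  then obtain r \<mu> where r: "strict_mono r" "\<mu> \<in> maximizers s" "(\<lambda>n. D (\<mu>s (r n)) s) \<longlonglongrightarrow> D \<mu> s"
    using maximizers_limit \<mu>s(1) by blast
  have "upper_deriv s + e \<le> D \<mu> s"
    using r(3) \<mu>s(2) by (intro LIMSEQ_le_const) (auto intro: less_imp_le)
  with D_le_upper_deriv[OF r(2)] assms show False by simp
qed

lemma right_quotient_tendsto:
  "((\<lambda>h. (g (s + h) - g s) / h) \<longlongrightarrow> upper_deriv s) (at_right 0)"
proof (rule tendsto_abs_le_epsI[where c=2])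
  fix e :: real assume e: "e > 0"
  obtain d1 where d1: "d1 > 0" and expand: "\<And>\<mu> s s'. \<mu> \<in> Th \<Longrightarrow> \<bar>s' - s\<bar> < d1 \<Longrightarrow>
      \<bar>F \<mu> s' - F \<mu> s - (s' - s) * D \<mu> s\<bar> \<le> e * \<bar>s' - s\<bar>"
    using uniform_deriv[OF e] by auto
  obtain d2 where d2: "d2 > 0" and usc: "\<And>s' \<mu>. \<bar>s' - s\<bar> < d2 \<Longrightarrow> \<mu> \<in> maximizers s' \<Longrightarrow>
      D \<mu> s \<le> upper_deriv s + e"
    using D_maximizers_usc[OF e, of s] by auto
  obtain \<mu>0 where \<mu>0: "\<mu>0 \<in> maximizers s" "D \<mu>0 s = upper_deriv s"
    using upper_deriv_attained by blast
  have "\<bar>(g (s + h) - g s) / h - upper_deriv s\<bar> \<le> 2 * e" if h: "0 < h" "h < min d1 d2" for h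
  proof -
    obtain \<mu>1 where \<mu>1: "\<mu>1 \<in> maximizers (s + h)" using maximizers_nonempty by blast
    have "h * upper_deriv s - e * h \<le> g (s + h) - g s"
      using expand[where \<mu>=\<mu>0 and s=s and s'="s + h"] F_le_g[of \<mu>0 "s + h"] \<mu>0 h
      by (auto dest!: maximizersD simp: abs_le_iff)
    moreover have "g (s + h) - g s \<le> h * upper_deriv s + 2 * (e * h)"
    proof -
      have "h * D \<mu>1 s \<le> h * (upper_deriv s + e)" using usc[OF _ \<mu>1] h by simp
      then have "h * D \<mu>1 s \<le> h * upper_deriv s + e * h" by (simp add: algebra_simps)
      moreover have "g (s + h) - F \<mu>1 s - h * D \<mu>1 s \<le> e * h" "F \<mu>1 s \<le> g s"
        using expand[where \<mu>=\<mu>1 and s=s and s'="s + h"] F_le_g[of \<mu>1 s] \<mu>1 h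
        by (auto dest!: maximizersD simp: abs_le_iff)
      ultimately show ?thesis by linarith
    qed
    ultimately have "upper_deriv s - e \<le> (g (s + h) - g s) / h"
      "(g (s + h) - g s) / h \<le> upper_deriv s + 2 * e"
      using h by (simp_all add: field_simps)
    then show ?thesis by (simp add: abs_le_iff)
  qed
  then show "eventually (\<lambda>h. \<bar>(g (s + h) - g s) / h - upper_deriv s\<bar> \<le> 2 * e) (at_right 0)"
    unfolding eventually_at_right_field using d1 d2 by (intro exI[of _ "min d1 d2"]) auto
qed

lemma D_maximizers_right:
  "eventually (\<lambda>s'. \<forall>\<mu>\<in>maximizers s'. \<bar>D \<mu> s' - upper_deriv s\<bar> \<le> 2 * e) (at_right s)"
  if e: "e > 0"
proof -
  obtain d1 where d1: "d1 > 0" and expand: "\<And>\<mu> s s'. \<mu> \<in> Th \<Longrightarrow> \<bar>s' - s\<bar> < d1 \<Longrightarrow>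
      \<bar>F \<mu> s' - F \<mu> s - (s' - s) * D \<mu> s\<bar> \<le> e * \<bar>s' - s\<bar>"
    using uniform_deriv[OF e] by auto
  obtain d2 where d2: "d2 > 0" and equi: "\<And>\<mu> s s'. \<mu> \<in> Th \<Longrightarrow> \<bar>s' - s\<bar> < d2 \<Longrightarrow>
      \<bar>D \<mu> s' - D \<mu> s\<bar> \<le> e"
    using D_equicont[OF e] by auto
  obtain d3 where d3: "d3 > 0" and usc: "\<And>s' \<mu>. \<bar>s' - s\<bar> < d3 \<Longrightarrow> \<mu> \<in> maximizers s' \<Longrightarrow>
      D \<mu> s \<le> upper_deriv s + e"
    using D_maximizers_usc[OF e, of s] by auto
  obtain \<mu>0 where \<mu>0: "\<mu>0 \<in> maximizers s" "D \<mu>0 s = upper_deriv s"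
    using upper_deriv_attained by blast
  txt \<open>The lower bound compares the expansion of \<open>F \<mu>\<close> around \<open>s + h\<close> with that of a
    maximizer at \<open>s\<close> realizing \<open>upper_deriv s\<close>.\<close>
  have bound: "\<bar>D \<mu> (s + h) - upper_deriv s\<bar> \<le> 2 * e"
    if h: "0 < h" "h < min d1 (min d2 d3)" and \<mu>: "\<mu> \<in> maximizers (s + h)" for h \<mu>
  proof -
    have \<mu>': "\<mu> \<in> Th" "F \<mu> (s + h) = g (s + h)" using \<mu> by (auto dest: maximizersD)
    have "D \<mu> (s + h) \<le> D \<mu> s + e"
      using abs_le_D1[OF equi[OF \<mu>'(1), where s=s and s'="s + h"]] h by simp
    moreover have "D \<mu> s \<le> upper_deriv s + e" using usc[OF _ \<mu>] h by simp
    moreover have "h * upper_deriv s - e * h \<le> g (s + h) - g s"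
      using expand[where \<mu>=\<mu>0 and s=s and s'="s + h"] F_le_g[of \<mu>0 "s + h"] \<mu>0 h
      by (auto dest!: maximizersD simp: abs_le_iff)
    moreover have "g (s + h) - h * D \<mu> (s + h) - F \<mu> s \<le> e * h"
      using expand[OF \<mu>'(1), where s="s + h" and s'=s] \<mu>'(2) h by (simp add: abs_le_iff)
    ultimately have "h * (upper_deriv s - 2 * e) \<le> h * D \<mu> (s + h)" "D \<mu> (s + h) \<le> upper_deriv s + 2 * e"
      using F_le_g[OF \<mu>'(1), of s] by (simp_all add: algebra_simps)
    then show ?thesis using h by (simp add: abs_le_iff)
  qed
  show ?thesis
    unfolding eventually_at_right_field
  proof (intro exI[of _ "s + min d1 (min d2 d3)"] conjI allI impI ballI)
    fix s' \<mu> assume "s < s'" "s' < s + min d1 (min d2 d3)" "\<mu> \<in> maximizers s'"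
    moreover from this have "s' - s < min d1 (min d2 d3)" by linarith
    ultimately show "\<bar>D \<mu> s' - upper_deriv s\<bar> \<le> 2 * e"
      using bound[of "s' - s" \<mu>] by simp
  qed (use d1 d2 d3 in simp)
qed

text \<open>The left-sided results are the right-sided ones for the reflected family
  \<open>s \<mapsto> F \<mu> (- s)\<close>.\<close>

lemma danskin_reflect: "danskin Th (\<lambda>\<mu> s. F \<mu> (- s)) (\<lambda>\<mu> s. - D \<mu> (- s)) (\<lambda>s. g (- s))"
proof unfold_locales
  fix e :: real assume "e > 0"
  then obtain d where "d > 0" and d: "\<forall>\<mu>\<in>Th. \<forall>s s'. \<bar>s' - s\<bar> < d \<longrightarrow>
      \<bar>F \<mu> s' - F \<mu> s - (s' - s) * D \<mu> s\<bar> \<le> e * \<bar>s' - s\<bar>"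
    using uniform_deriv by blast
  have "\<bar>F \<mu> (- s') - F \<mu> (- s) - (s' - s) * - D \<mu> (- s)\<bar> \<le> e * \<bar>s' - s\<bar>"
    if "\<mu> \<in> Th" "\<bar>s' - s\<bar> < d" for \<mu> s s'
  proof -
    have "(s' - s) * - D \<mu> (- s) = (- s' - - s) * D \<mu> (- s)" "\<bar>s' - s\<bar> = \<bar>- s' - - s\<bar>"
      by (simp_all add: algebra_simps abs_minus_commute)
    then show ?thesis using d[rule_format, OF that(1), where s="- s" and s'="- s'"] that by simp
  qed
  with \<open>d > 0\<close> show "\<exists>d>0. \<forall>\<mu>\<in>Th. \<forall>s s'. \<bar>s' - s\<bar> < d \<longrightarrow>
      \<bar>F \<mu> (- s') - F \<mu> (- s) - (s' - s) * - D \<mu> (- s)\<bar> \<le> e * \<bar>s' - s\<bar>"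
    by blast
next
  fix e :: real assume "e > 0"
  then obtain d where "d > 0" and d: "\<forall>\<mu>\<in>Th. \<forall>s s'. \<bar>s' - s\<bar> < d \<longrightarrow> \<bar>D \<mu> s' - D \<mu> s\<bar> \<le> e"
    using D_equicont by blast
  have "\<bar>- D \<mu> (- s') - - D \<mu> (- s)\<bar> \<le> e" if "\<mu> \<in> Th" "\<bar>s' - s\<bar> < d" for \<mu> s s'
    using d that by (auto dest!: bspec[of _ _ \<mu>] spec[of _ "- s"] spec[of _ "- s'"]
        simp: abs_minus_commute)
  with \<open>d > 0\<close> show "\<exists>d>0. \<forall>\<mu>\<in>Th. \<forall>s s'. \<bar>s' - s\<bar> < d \<longrightarrow> \<bar>- D \<mu> (- s') - - D \<mu> (- s)\<bar> \<le> e"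
    by blast
next
  fix \<mu>s :: "nat \<Rightarrow> 'm" and s :: real assume "\<And>n. \<mu>s n \<in> Th"
  then obtain r \<mu> where r\<mu>: "strict_mono r" "\<mu> \<in> Th" "(\<lambda>n. F (\<mu>s (r n)) (- s)) \<longlonglongrightarrow> F \<mu> (- s)"
      "(\<lambda>n. D (\<mu>s (r n)) (- s)) \<longlonglongrightarrow> D \<mu> (- s)"
    using seq_compact[of \<mu>s "- s"] by blast
  with r\<mu> show "\<exists>r \<mu>. strict_mono r \<and> \<mu> \<in> Th \<and> (\<lambda>n. F (\<mu>s (r n)) (- s)) \<longlonglongrightarrow> F \<mu> (- s) \<and>
      (\<lambda>n. - D (\<mu>s (r n)) (- s)) \<longlonglongrightarrow> - D \<mu> (- s)"
    by (intro exI[of _ r] exI[of _ \<mu>] conjI tendsto_minus) auto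
qed (use nonempty F_bdd_above D_bounded g_def in auto)

lemma left_quotient_tendsto:
  "((\<lambda>h. (g (s - h) - g s) / (- h)) \<longlongrightarrow> lower_deriv s) (at_right 0)"
proof -
  interpret R: danskin Th "\<lambda>\<mu> s. F \<mu> (- s)" "\<lambda>\<mu> s. - D \<mu> (- s)" "\<lambda>s. g (- s)"
    by (rule danskin_reflect)
  have "R.upper_deriv (- s) = - lower_deriv s"
    by (simp add: R.upper_deriv_def R.maximizers_def lower_deriv_def maximizers_def
        Inf_real_def image_image)
  then have "((\<lambda>h. (g (s - h) - g s) / h) \<longlongrightarrow> - lower_deriv s) (at_right 0)"
    using R.right_quotient_tendsto[of "- s"] by simp
  then have "((\<lambda>h. - ((g (s - h) - g s) / h)) \<longlongrightarrow> lower_deriv s) (at_right 0)"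
    using tendsto_minus by fastforce
  then show ?thesis by simp
qed

lemma D_maximizers_left:
  "eventually (\<lambda>s'. \<forall>\<mu>\<in>maximizers s'. \<bar>D \<mu> s' - lower_deriv s\<bar> \<le> 2 * e) (at_left s)"
  if "e > 0"
proof -
  interpret R: danskin Th "\<lambda>\<mu> s. F \<mu> (- s)" "\<lambda>\<mu> s. - D \<mu> (- s)" "\<lambda>s. g (- s)"
    by (rule danskin_reflect)
  have "R.upper_deriv (- s) = - lower_deriv s"
    by (simp add: R.upper_deriv_def R.maximizers_def lower_deriv_def maximizers_def
        Inf_real_def image_image)
  moreover have "R.maximizers s' = maximizers (- s')" for s'
    by (simp add: R.maximizers_def maximizers_def)
  ultimately show ?thesis
    using R.D_maximizers_right[OF that, of "- s"]
    by (simp add: eventually_at_left_to_right[of _ s] abs_minus_commute)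
qed

lemma upper_lower_deriv_tendsto:
  assumes "\<And>e. e > 0 \<Longrightarrow> eventually (\<lambda>s'. \<forall>\<mu>\<in>maximizers s'. \<bar>D \<mu> s' - L\<bar> \<le> c * e) net"
  shows "(upper_deriv \<longlongrightarrow> L) net" "(lower_deriv \<longlongrightarrow> L) net"
proof -
  show "(upper_deriv \<longlongrightarrow> L) net"
  proof (rule tendsto_abs_le_epsI)
    fix e :: real assume "e > 0"
    from assms[OF this] show "eventually (\<lambda>s'. \<bar>upper_deriv s' - L\<bar> \<le> c * e) net"
      by eventually_elim (metis upper_deriv_attained)
  qed
  show "(lower_deriv \<longlongrightarrow> L) net"
  proof (rule tendsto_abs_le_epsI)
    fix e :: real assume "e > 0"
    from assms[OF this] show "eventually (\<lambda>s'. \<bar>lower_deriv s' - L\<bar> \<le> c * e) net"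
      by eventually_elim (metis lower_deriv_attained)
  qed
qed

lemma upper_lower_deriv_tendsto_right:
  "(upper_deriv \<longlongrightarrow> upper_deriv s) (at_right s)" "(lower_deriv \<longlongrightarrow> upper_deriv s) (at_right s)"
  using upper_lower_deriv_tendsto[OF D_maximizers_right] by auto

lemma upper_lower_deriv_tendsto_left:
  "(upper_deriv \<longlongrightarrow> lower_deriv s) (at_left s)" "(lower_deriv \<longlongrightarrow> lower_deriv s) (at_left s)"
  using upper_lower_deriv_tendsto[OF D_maximizers_left] by auto

lemma has_real_derivative_right: "(g has_real_derivative upper_deriv s) (at_right s)"
  unfolding has_real_derivative_at_right_iff by (rule right_quotient_tendsto)

lemma has_real_derivative_left: "(g has_real_derivative lower_deriv s) (at_left s)"
  unfolding has_real_derivative_at_left_iff by (rule left_quotient_tendsto)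

lemma rderiv_eq_upper_deriv: "rderiv g = upper_deriv"
  using rderiv_eqI[OF has_real_derivative_right] by blast

lemma lderiv_eq_lower_deriv: "lderiv g = lower_deriv"
  using lderiv_eqI[OF has_real_derivative_left] by blast

lemma upper_deriv_divide: "c > 0 \<Longrightarrow> upper_deriv s / c = (SUP \<mu>\<in>maximizers s. D \<mu> s / c)"
  unfolding upper_deriv_def by (rule cSUP_divide[OF maximizers_nonempty bounded_D_maximizers(1)])

lemma lower_deriv_divide: "c > 0 \<Longrightarrow> lower_deriv s / c = (INF \<mu>\<in>maximizers s. D \<mu> s / c)"
  unfolding lower_deriv_def by (rule cINF_divide[OF maximizers_nonempty bounded_D_maximizers(2)])

lemma one_sided_derivative_limits:
  "((\<lambda>\<delta>. rderiv g (s + \<delta>)) \<longlongrightarrow> rderiv g s) (at_right 0)"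
  "((\<lambda>\<delta>. lderiv g (s + \<delta>)) \<longlongrightarrow> rderiv g s) (at_right 0)"
  "((\<lambda>\<delta>. rderiv g (s - \<delta>)) \<longlongrightarrow> lderiv g s) (at_right 0)"
  "((\<lambda>\<delta>. lderiv g (s - \<delta>)) \<longlongrightarrow> lderiv g s) (at_right 0)"
  using upper_lower_deriv_tendsto_right[of s] upper_lower_deriv_tendsto_left[of s]
  unfolding rderiv_eq_upper_deriv lderiv_eq_lower_deriv
    tendsto_at_right_shift[where s=s] tendsto_at_left_shift[where s=s]
  by auto

lemma sqrt_reparam_has_derivative:
  assumes "r > 0"
  shows "((\<lambda>s. g (sqrt s)) has_real_derivative upper_deriv (sqrt r) / (2 * sqrt r)) (at_right r)"
    and "((\<lambda>s. g (sqrt s)) has_real_derivative lower_deriv (sqrt r) / (2 * sqrt r)) (at_left r)"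
proof -
  have sqrt: "(sqrt has_real_derivative 1 / (2 * sqrt r)) (at r)"
    using DERIV_real_sqrt[OF assms] by (simp add: inverse_eq_divide mult.commute)
  show "((\<lambda>s. g (sqrt s)) has_real_derivative upper_deriv (sqrt r) / (2 * sqrt r)) (at_right r)"
    using has_real_derivative_at_right_compose[OF has_real_derivative_right sqrt strict_mono_sqrt]
    by simp
  show "((\<lambda>s. g (sqrt s)) has_real_derivative lower_deriv (sqrt r) / (2 * sqrt r)) (at_left r)"
    using has_real_derivative_at_left_compose[OF has_real_derivative_left sqrt strict_mono_sqrt]
    by simp
qed

lemma sqrt_reparam_derivative_limits:
  assumes "t > 0"
  shows "((\<lambda>\<delta>. rderiv (\<lambda>s. g (sqrt s)) (t + \<delta>)) \<longlongrightarrow> rderiv (\<lambda>s. g (sqrt s)) t) (at_right 0)"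
    "((\<lambda>\<delta>. lderiv (\<lambda>s. g (sqrt s)) (t + \<delta>)) \<longlongrightarrow> rderiv (\<lambda>s. g (sqrt s)) t) (at_right 0)"
    "((\<lambda>\<delta>. rderiv (\<lambda>s. g (sqrt s)) (t - \<delta>)) \<longlongrightarrow> lderiv (\<lambda>s. g (sqrt s)) t) (at_right 0)"
    "((\<lambda>\<delta>. lderiv (\<lambda>s. g (sqrt s)) (t - \<delta>)) \<longlongrightarrow> lderiv (\<lambda>s. g (sqrt s)) t) (at_right 0)"
proof -
  let ?G = "\<lambda>s. g (sqrt s)"
  have rG: "upper_deriv (sqrt r) / (2 * sqrt r) = rderiv ?G r"
    and lG: "lower_deriv (sqrt r) / (2 * sqrt r) = lderiv ?G r" if "r > 0" for r
    using sqrt_reparam_has_derivative[OF that] by (auto intro: rderiv_eqI[symmetric] lderiv_eqI[symmetric])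
  have "eventually (\<lambda>r. 0 < r) (at_right t)"
    using eventually_at_right_less[of t] by eventually_elim (use assms in simp)
  then have rR: "eventually (\<lambda>r. upper_deriv (sqrt r) / (2 * sqrt r) = rderiv ?G r) (at_right t)"
    and lR: "eventually (\<lambda>r. lower_deriv (sqrt r) / (2 * sqrt r) = lderiv ?G r) (at_right t)"
    by (auto elim!: eventually_mono intro: rG lG)
  have "eventually (\<lambda>r. 0 < r) (at_left t)"
    unfolding eventually_at_left_field using assms by (intro exI[of _ 0]) auto
  then have rL: "eventually (\<lambda>r. upper_deriv (sqrt r) / (2 * sqrt r) = rderiv ?G r) (at_left t)"
    and lL: "eventually (\<lambda>r. lower_deriv (sqrt r) / (2 * sqrt r) = lderiv ?G r) (at_left t)"
    by (auto elim!: eventually_mono intro: rG lG)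
  note sqrt_right = filterlim_strict_mono_at_right[OF strict_mono_sqrt isCont_real_sqrt, of t]
  note sqrt_left = filterlim_strict_mono_at_left[OF strict_mono_sqrt isCont_real_sqrt, of t]
  have "(rderiv ?G \<longlongrightarrow> rderiv ?G t) (at_right t)"
    unfolding rG[OF assms, symmetric] using upper_lower_deriv_tendsto_right(1) sqrt_right assms rR
    by (rule Lim_transform_eventually[OF tendsto_sqrt_quotient_compose])
  moreover have "(lderiv ?G \<longlongrightarrow> rderiv ?G t) (at_right t)"
    unfolding rG[OF assms, symmetric] using upper_lower_deriv_tendsto_right(2) sqrt_right assms lR
    by (rule Lim_transform_eventually[OF tendsto_sqrt_quotient_compose])
  moreover have "(rderiv ?G \<longlongrightarrow> lderiv ?G t) (at_left t)"
    unfolding lG[OF assms, symmetric] using upper_lower_deriv_tendsto_left(1) sqrt_left assms rL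
    by (rule Lim_transform_eventually[OF tendsto_sqrt_quotient_compose])
  moreover have "(lderiv ?G \<longlongrightarrow> lderiv ?G t) (at_left t)"
    unfolding lG[OF assms, symmetric] using upper_lower_deriv_tendsto_left(2) sqrt_left assms lL
    by (rule Lim_transform_eventually[OF tendsto_sqrt_quotient_compose])
  ultimately show "((\<lambda>\<delta>. rderiv ?G (t + \<delta>)) \<longlongrightarrow> rderiv ?G t) (at_right 0)"
    "((\<lambda>\<delta>. lderiv ?G (t + \<delta>)) \<longlongrightarrow> rderiv ?G t) (at_right 0)"
    "((\<lambda>\<delta>. rderiv ?G (t - \<delta>)) \<longlongrightarrow> lderiv ?G t) (at_right 0)"
    "((\<lambda>\<delta>. lderiv ?G (t - \<delta>)) \<longlongrightarrow> lderiv ?G t) (at_right 0)"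
    unfolding tendsto_at_right_shift[where s=t] tendsto_at_left_shift[where s=t] by auto
qed

end

section \<open>Taylor remainder estimates\<close>

lemma bounded_lipschitz_modulus:
  fixes f f' :: "real \<Rightarrow> real"
  assumes "\<And>z. (f has_real_derivative f' z) (at z)" "\<And>z. \<bar>f z\<bar> \<le> M1" "\<And>z. \<bar>f' z\<bar> \<le> M2"
  shows "\<bar>f p - f q\<bar> \<le> (2 * M1 + M2) * min 1 \<bar>p - q\<bar>"
proof -
  have M: "0 \<le> M1" "0 \<le> M2" using assms(2,3)[of 0] by linarith+
  have lip: "\<bar>f p - f q\<bar> \<le> M2 * \<bar>p - q\<bar>"
    using field_differentiable_bound[of UNIV f f' M2 p q] assms(1,3) by simp
  show ?thesis
  proof (cases "\<bar>p - q\<bar> \<le> 1")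
    case True
    have "M2 * \<bar>p - q\<bar> \<le> (2 * M1 + M2) * \<bar>p - q\<bar>" using M by (intro mult_right_mono) auto
    with True lip show ?thesis by simp
  next
    case False
    then show ?thesis using assms(2)[of p] assms(2)[of q] M by simp
  qed
qed

lemma taylor_remainder_modulus:
  fixes f f' :: "real \<Rightarrow> real"
  assumes "\<And>z. (f has_real_derivative f' z) (at z)" "\<And>p q. \<bar>f' p - f' q\<bar> \<le> A * min 1 \<bar>p - q\<bar>"
  shows "\<bar>f (p + q) - f p - q * f' p\<bar> \<le> A * \<bar>q\<bar> * min 1 \<bar>q\<bar>"
proof -
  let ?S = "closed_segment p (p + q)"
  have deriv: "((\<lambda>z. f z - z * f' p) has_real_derivative f' z - f' p) (at z within ?S)" for z
    by (auto intro!: derivative_eq_intros has_field_derivative_at_within[OF assms(1)])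
  have A: "0 \<le> A" using assms(2)[of 1 0] by simp
  have bound: "norm (f' z - f' p) \<le> A * min 1 \<bar>q\<bar>" if "z \<in> ?S" for z
  proof -
    have "\<bar>z - p\<bar> \<le> \<bar>q\<bar>" using dist_in_closed_segment[OF that] by (simp add: dist_real_def)
    then have "A * min 1 \<bar>z - p\<bar> \<le> A * min 1 \<bar>q\<bar>" using A by (intro mult_left_mono min.mono) auto
    then show ?thesis using assms(2)[of z p] by simp
  qed
  have "\<bar>(f (p + q) - (p + q) * f' p) - (f p - p * f' p)\<bar> \<le> A * min 1 \<bar>q\<bar> * \<bar>p + q - p\<bar>"
    using field_differentiable_bound[OF convex_closed_segment deriv bound
        ends_in_segment(2) ends_in_segment(1)] by simp
  then show ?thesis by (simp add: algebra_simps)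
qed

definition remainder_weight :: "real \<Rightarrow> real \<Rightarrow> real" where
  "remainder_weight \<rho> y = (1 + \<bar>y\<bar>) * min 1 (\<rho> * (1 + \<bar>y\<bar>))"

lemma remainder_weight_nonneg: "0 \<le> \<rho> \<Longrightarrow> 0 \<le> remainder_weight \<rho> y"
  unfolding remainder_weight_def by simp

lemma remainder_weight_le: "0 \<le> \<rho> \<Longrightarrow> remainder_weight \<rho> y \<le> 1 + \<bar>y\<bar>"
  unfolding remainder_weight_def by (simp add: mult_left_le)

lemma remainder_weight_ge:
  assumes "0 \<le> \<rho>" "0 \<le> b" "b \<le> 1 + \<bar>y\<bar>"
  shows "b * min 1 (\<rho> * b) \<le> remainder_weight \<rho> y"
  unfolding remainder_weight_def using assms
  by (intro mult_mono min.mono mult_left_mono) auto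

lemma affine_taylor_remainder:
  fixes f f' :: "real \<Rightarrow> real"
  assumes "\<And>z. (f has_real_derivative f' z) (at z)" "\<And>p q. \<bar>f' p - f' q\<bar> \<le> A * min 1 \<bar>p - q\<bar>"
    and "0 \<le> A" "\<bar>b\<bar> \<le> 1 + \<bar>y\<bar>"
  shows "\<bar>f (c + a' * b) - f (c + a * b) - (a' - a) * (b * f' (c + a * b))\<bar>
      \<le> A * \<bar>a' - a\<bar> * remainder_weight \<bar>a' - a\<bar> y"
proof -
  have "\<bar>f (c + a' * b) - f (c + a * b) - (a' - a) * (b * f' (c + a * b))\<bar>
      \<le> A * \<bar>(a' - a) * b\<bar> * min 1 \<bar>(a' - a) * b\<bar>"
    using taylor_remainder_modulus[OF assms(1,2), of "c + a * b" "(a' - a) * b"]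
    by (simp add: algebra_simps)
  also have "\<dots> = A * \<bar>a' - a\<bar> * (\<bar>b\<bar> * min 1 (\<bar>a' - a\<bar> * \<bar>b\<bar>))"
    by (simp add: abs_mult)
  also have "\<dots> \<le> A * \<bar>a' - a\<bar> * remainder_weight \<bar>a' - a\<bar> y"
    using assms(3,4) by (intro mult_left_mono remainder_weight_ge) auto
  finally show ?thesis .
qed

lemma affine_modulus:
  fixes f :: "real \<Rightarrow> real"
  assumes "\<And>p q. \<bar>f p - f q\<bar> \<le> A * min 1 \<bar>p - q\<bar>" "0 \<le> A" "\<bar>b\<bar> \<le> 1 + \<bar>y\<bar>"
  shows "\<bar>b * f (c + a' * b) - b * f (c + a * b)\<bar> \<le> A * remainder_weight \<bar>a' - a\<bar> y"
proof -
  have "c + a' * b - (c + a * b) = (a' - a) * b" by (simp add: algebra_simps)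
  then have "\<bar>f (c + a' * b) - f (c + a * b)\<bar> \<le> A * min 1 (\<bar>a' - a\<bar> * \<bar>b\<bar>)"
    using assms(1)[of "c + a' * b" "c + a * b"] by (simp add: abs_mult)
  then have "\<bar>b * f (c + a' * b) - b * f (c + a * b)\<bar> \<le> \<bar>b\<bar> * (A * min 1 (\<bar>a' - a\<bar> * \<bar>b\<bar>))"
    by (simp add: abs_mult mult_left_mono flip: right_diff_distrib)
  also have "\<dots> \<le> A * remainder_weight \<bar>a' - a\<bar> y"
    using assms(2,3) remainder_weight_ge[of "\<bar>a' - a\<bar>" "\<bar>b\<bar>" y]
    by (simp add: mult.left_commute mult_left_mono)
  finally show ?thesis .
qed

section \<open>Measures with uniformly integrable first moment\<close>

lemma remainder_weight_tail_bound:
  assumes "0 \<le> \<rho>" "1 \<le> N"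
  shows "remainder_weight \<rho> y \<le> 2 * (\<bar>y\<bar> * indicator {z. \<bar>z\<bar> > N} y) + \<rho> * (1 + N)\<^sup>2"
proof (cases "N < \<bar>y\<bar>")
  case True
  then have "remainder_weight \<rho> y \<le> 2 * \<bar>y\<bar>"
    using remainder_weight_le[OF assms(1), of y] assms(2) by linarith
  moreover have "0 \<le> \<rho> * (1 + N)\<^sup>2" using assms(1) by simp
  ultimately show ?thesis using True by simp
next
  case False
  have "remainder_weight \<rho> y \<le> (1 + \<bar>y\<bar>) * (\<rho> * (1 + \<bar>y\<bar>))"
    unfolding remainder_weight_def by (intro mult_left_mono) auto
  also have "\<dots> = \<rho> * (1 + \<bar>y\<bar>)\<^sup>2" by (simp add: power2_eq_square)
  also have "\<dots> \<le> \<rho> * (1 + N)\<^sup>2"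
    using False assms by (intro mult_left_mono power_mono) auto
  finally show ?thesis using False by simp
qed

lemma abs_clamp_le:
  fixes N y :: real
  assumes "0 \<le> N"
  shows "\<bar>max (- N) (min N y)\<bar> \<le> N" "\<bar>max (- N) (min N y)\<bar> \<le> \<bar>y\<bar>"
  using assms by (auto simp: max_def min_def)

lemma truncation_error:
  fixes f :: "real \<Rightarrow> real"
  assumes f: "\<And>y. \<bar>f y\<bar> \<le> C * (1 + \<bar>y\<bar>)" and N: "1 \<le> N"
  shows "\<bar>f y - f (max (- N) (min N y))\<bar> \<le> 4 * C * (\<bar>y\<bar> * indicator {z. \<bar>z\<bar> > N} y)"
proof (cases "N < \<bar>y\<bar>")
  case True
  have C: "0 \<le> C" using f[of 0] by simp
  have "C * (1 + \<bar>max (- N) (min N y)\<bar>) \<le> C * (1 + \<bar>y\<bar>)"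
    using abs_clamp_le(2)[of N y] N C by (intro mult_left_mono) auto
  then have "\<bar>f y - f (max (- N) (min N y))\<bar> \<le> 2 * (C * (1 + \<bar>y\<bar>))"
    using f[of y] f[of "max (- N) (min N y)"] by linarith
  also have "\<dots> \<le> 2 * (C * (2 * \<bar>y\<bar>))"
    using True N C by (intro mult_left_mono) auto
  finally show ?thesis using True by simp
next
  case False
  then show ?thesis by (auto simp: max_def min_def)
qed

locale unif_integrable_measures =
  fixes \<Theta> :: "real measure set"
  assumes prob: "\<And>\<mu>. \<mu> \<in> \<Theta> \<Longrightarrow> prob_space \<mu> \<and> sets \<mu> = sets borel"
    and unif_int: "((\<lambda>N. SUP \<mu>\<in>\<Theta>. \<integral>\<^sup>+ y. ennreal (\<bar>y\<bar> * indicator {z. \<bar>z\<bar> > N} y) \<partial>\<mu>)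
                     \<longlongrightarrow> 0) at_top"
begin

lemma real_distribution_member: "\<mu> \<in> \<Theta> \<Longrightarrow> real_distribution \<mu>"
  using prob[of \<mu>] by (simp add: real_distribution_def real_distribution_axioms_def)

lemma measurable_member:
  fixes f :: "real \<Rightarrow> real"
  assumes "\<mu> \<in> \<Theta>" "f \<in> borel_measurable borel"
  shows "f \<in> borel_measurable \<mu>"
proof -
  have eq: "measurable \<mu> borel = measurable borel (borel :: real measure)"
    by (rule measurable_cong_sets) (use prob[OF assms(1)] in auto)
  show ?thesis by (subst eq) (rule assms(2))
qed

lemma tail_integral_small:
  assumes "e > 0"
  shows "\<exists>N\<ge>1. \<forall>\<mu>\<in>\<Theta>. integrable \<mu> (\<lambda>y. \<bar>y\<bar> * indicator {z. \<bar>z\<bar> > N} y) \<and>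
      (\<integral>y. \<bar>y\<bar> * indicator {z. \<bar>z\<bar> > N} y \<partial>\<mu>) \<le> e"
proof -
  have "eventually (\<lambda>N. (SUP \<mu>\<in>\<Theta>. \<integral>\<^sup>+ y. ennreal (\<bar>y\<bar> * indicator {z. \<bar>z\<bar> > N} y) \<partial>\<mu>)
      < ennreal e) at_top"
    using order_tendstoD(2)[OF unif_int] assms by simp
  then obtain N0 where N0: "\<And>N. N \<ge> N0 \<Longrightarrow>
      (SUP \<mu>\<in>\<Theta>. \<integral>\<^sup>+ y. ennreal (\<bar>y\<bar> * indicator {z. \<bar>z\<bar> > N} y) \<partial>\<mu>) < ennreal e"
    by (auto simp: eventually_at_top_linorder)
  define N where "N = max N0 1"
  have "integrable \<mu> (\<lambda>y. \<bar>y\<bar> * indicator {z. \<bar>z\<bar> > N} y) \<and>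
      (\<integral>y. \<bar>y\<bar> * indicator {z. \<bar>z\<bar> > N} y \<partial>\<mu>) \<le> e" if \<mu>: "\<mu> \<in> \<Theta>" for \<mu>
  proof -
    have less: "(\<integral>\<^sup>+ y. ennreal (\<bar>y\<bar> * indicator {z. \<bar>z\<bar> > N} y) \<partial>\<mu>) < ennreal e"
      using SUP_upper[OF \<mu>, of "\<lambda>\<mu>. \<integral>\<^sup>+ y. ennreal (\<bar>y\<bar> * indicator {z. \<bar>z\<bar> > N} y) \<partial>\<mu>"] N0[of N]
      by (simp add: N_def)
    have "(\<lambda>y. \<bar>y\<bar> * indicator {z. \<bar>z\<bar> > N} y) \<in> borel_measurable borel"
      by measurable
    then have int: "integrable \<mu> (\<lambda>y. \<bar>y\<bar> * indicator {z. \<bar>z\<bar> > N} y)"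
      using less by (intro integrableI_nonneg measurable_member[OF \<mu>])
        (auto simp: top.not_eq_extremum intro: less_trans)
    have "ennreal (\<integral>y. \<bar>y\<bar> * indicator {z. \<bar>z\<bar> > N} y \<partial>\<mu>) < ennreal e"
      using less nn_integral_eq_integral[OF int] by simp
    moreover have "0 \<le> (\<integral>y. \<bar>y\<bar> * indicator {z. \<bar>z\<bar> > N} y \<partial>\<mu>)"
      by (intro integral_nonneg_AE) auto
    ultimately show ?thesis using int ennreal_less_iff by auto
  qed
  then show ?thesis by (intro exI[of _ N]) (auto simp: N_def)
qed

lemma first_moment_bounded: "\<exists>K. \<forall>\<mu>\<in>\<Theta>. integrable \<mu> (\<lambda>y. \<bar>y\<bar>) \<and> (\<integral>y. \<bar>y\<bar> \<partial>\<mu>) \<le> K"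
proof -
  obtain N where N: "N \<ge> 1" and tail: "\<And>\<mu>. \<mu> \<in> \<Theta> \<Longrightarrow>
      integrable \<mu> (\<lambda>y. \<bar>y\<bar> * indicator {z. \<bar>z\<bar> > N} y) \<and> (\<integral>y. \<bar>y\<bar> * indicator {z. \<bar>z\<bar> > N} y \<partial>\<mu>) \<le> 1"
    using tail_integral_small[of 1] by auto
  have "integrable \<mu> (\<lambda>y. \<bar>y\<bar>) \<and> (\<integral>y. \<bar>y\<bar> \<partial>\<mu>) \<le> 1 + N" if \<mu>: "\<mu> \<in> \<Theta>" for \<mu>
  proof -
    interpret real_distribution \<mu> by (rule real_distribution_member[OF \<mu>])
    have split: "\<bar>y\<bar> \<le> \<bar>y\<bar> * indicator {z. \<bar>z\<bar> > N} y + N" for y :: real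
      using N by (auto simp: indicator_def)
    have int: "integrable \<mu> (\<lambda>y. \<bar>y\<bar> * indicator {z. \<bar>z\<bar> > N} y + N)" using tail[OF \<mu>] by simp
    have "integrable \<mu> (\<lambda>y. \<bar>y\<bar>)"
      using split N by (intro Bochner_Integration.integrable_bound[OF int]) (auto intro: AE_I2)
    moreover from this have "(\<integral>y. \<bar>y\<bar> \<partial>\<mu>) \<le> (\<integral>y. \<bar>y\<bar> * indicator {z. \<bar>z\<bar> > N} y + N \<partial>\<mu>)"
      using int split by (rule integral_mono)
    ultimately show ?thesis using tail[OF \<mu>] prob_space by simp
  qed
  then show ?thesis by blast
qed

lemma integrable_linear_growth:
  assumes "\<mu> \<in> \<Theta>" "f \<in> borel_measurable borel" "\<And>y. \<bar>f y\<bar> \<le> C * (1 + \<bar>y\<bar>)"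
  shows "integrable \<mu> f"
proof -
  interpret real_distribution \<mu> by (rule real_distribution_member[OF assms(1)])
  have int: "integrable \<mu> (\<lambda>y. C * (1 + \<bar>y\<bar>))"
    using first_moment_bounded assms(1) by (auto simp: distrib_left)
  show ?thesis
  proof (rule Bochner_Integration.integrable_bound[OF int measurable_member[OF assms(1,2)]])
    show "AE y in \<mu>. norm (f y) \<le> norm (C * (1 + \<bar>y\<bar>))"
      using assms(3) by (intro AE_I2) (metis abs_ge_self order_trans real_norm_def)
  qed
qed

lemma integral_linear_growth_bounded:
  assumes "f \<in> borel_measurable borel" "\<And>y. \<bar>f y\<bar> \<le> C * (1 + \<bar>y\<bar>)"
  shows "\<exists>B. \<forall>\<mu>\<in>\<Theta>. \<bar>\<integral>y. f y \<partial>\<mu>\<bar> \<le> B"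
proof -
  obtain K where K: "\<And>\<mu>. \<mu> \<in> \<Theta> \<Longrightarrow> integrable \<mu> (\<lambda>y. \<bar>y\<bar>) \<and> (\<integral>y. \<bar>y\<bar> \<partial>\<mu>) \<le> K"
    using first_moment_bounded by blast
  have C: "0 \<le> C" using assms(2)[of 0] by simp
  have "\<bar>\<integral>y. f y \<partial>\<mu>\<bar> \<le> C * (1 + K)" if \<mu>: "\<mu> \<in> \<Theta>" for \<mu>
  proof -
    interpret real_distribution \<mu> by (rule real_distribution_member[OF \<mu>])
    have int: "integrable \<mu> (\<lambda>y. C * (1 + \<bar>y\<bar>))" using K[OF \<mu>] by (simp add: distrib_left)
    have "\<bar>\<integral>y. f y \<partial>\<mu>\<bar> \<le> (\<integral>y. C * (1 + \<bar>y\<bar>) \<partial>\<mu>)"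
      by (rule integral_abs_bound_integral[OF integrable_linear_growth[OF \<mu> assms] int assms(2)])
    also have "\<dots> = C * (1 + (\<integral>y. \<bar>y\<bar> \<partial>\<mu>))" using K[OF \<mu>] prob_space by (simp add: distrib_left)
    also have "\<dots> \<le> C * (1 + K)" using K[OF \<mu>] C by (intro mult_left_mono) auto
    finally show ?thesis .
  qed
  then show ?thesis by blast
qed

lemma remainder_weight_integral_small:
  assumes "e > 0"
  shows "\<exists>\<eta>>0. \<forall>\<rho> \<mu>. 0 \<le> \<rho> \<longrightarrow> \<rho> \<le> \<eta> \<longrightarrow> \<mu> \<in> \<Theta> \<longrightarrow> (\<integral>y. remainder_weight \<rho> y \<partial>\<mu>) \<le> e"
proof -
  obtain N where N: "N \<ge> 1" and tail: "\<And>\<mu>. \<mu> \<in> \<Theta> \<Longrightarrow>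
      integrable \<mu> (\<lambda>y. \<bar>y\<bar> * indicator {z. \<bar>z\<bar> > N} y) \<and>
      (\<integral>y. \<bar>y\<bar> * indicator {z. \<bar>z\<bar> > N} y \<partial>\<mu>) \<le> e / 4"
    using tail_integral_small[of "e / 4"] assms by auto
  define \<eta> where "\<eta> = e / (2 * (1 + N)\<^sup>2)"
  have \<eta>: "\<eta> > 0" using assms N by (simp add: \<eta>_def)
  have "(\<integral>y. remainder_weight \<rho> y \<partial>\<mu>) \<le> e" if \<rho>: "0 \<le> \<rho>" "\<rho> \<le> \<eta>" and \<mu>: "\<mu> \<in> \<Theta>" for \<rho> \<mu>
  proof -
    interpret real_distribution \<mu> by (rule real_distribution_member[OF \<mu>])
    have "(\<lambda>y. remainder_weight \<rho> y) \<in> borel_measurable borel"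
      unfolding remainder_weight_def by measurable
    then have "integrable \<mu> (remainder_weight \<rho>)"
      using remainder_weight_le[OF \<rho>(1)] remainder_weight_nonneg[OF \<rho>(1)]
      by (intro integrable_linear_growth[OF \<mu>, where C=1]) auto
    then have "(\<integral>y. remainder_weight \<rho> y \<partial>\<mu>) \<le>
        (\<integral>y. 2 * (\<bar>y\<bar> * indicator {z. \<bar>z\<bar> > N} y) + \<rho> * (1 + N)\<^sup>2 \<partial>\<mu>)"
      using tail[OF \<mu>] remainder_weight_tail_bound[OF \<rho>(1) N] by (intro integral_mono) auto
    also have "\<dots> = 2 * (\<integral>y. \<bar>y\<bar> * indicator {z. \<bar>z\<bar> > N} y \<partial>\<mu>) + \<rho> * (1 + N)\<^sup>2"
      using tail[OF \<mu>] prob_space by simp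
    also have "\<dots> \<le> 2 * (e / 4) + \<eta> * (1 + N)\<^sup>2"
      using tail[OF \<mu>] \<rho> by (intro add_mono mult_right_mono) auto
    also have "\<dots> = e" using N by (simp add: \<eta>_def)
    finally show ?thesis .
  qed
  with \<eta> show ?thesis by blast
qed

lemma abs_integral_le_remainder_weight:
  assumes "\<mu> \<in> \<Theta>" "0 \<le> \<rho>" "f \<in> borel_measurable borel"
    and "\<And>y. \<bar>f y\<bar> \<le> c * remainder_weight \<rho> y"
  shows "\<bar>\<integral>y. f y \<partial>\<mu>\<bar> \<le> c * (\<integral>y. remainder_weight \<rho> y \<partial>\<mu>)"
proof -
  have c: "0 \<le> c * remainder_weight \<rho> y" for y using assms(4)[of y] by linarith
  have "\<bar>c * remainder_weight \<rho> y\<bar> \<le> \<bar>c\<bar> * (1 + \<bar>y\<bar>)" for y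
    using remainder_weight_le[OF assms(2)] remainder_weight_nonneg[OF assms(2)]
    by (simp add: abs_mult mult_left_mono)
  moreover have "(\<lambda>y. c * remainder_weight \<rho> y) \<in> borel_measurable borel"
    unfolding remainder_weight_def by measurable
  ultimately have "integrable \<mu> (\<lambda>y. c * remainder_weight \<rho> y)"
    by (intro integrable_linear_growth[OF assms(1)])
  moreover have "integrable \<mu> f"
    using assms(3,4) c \<open>\<And>y. \<bar>c * remainder_weight \<rho> y\<bar> \<le> \<bar>c\<bar> * (1 + \<bar>y\<bar>)\<close>
    by (intro integrable_linear_growth[OF assms(1,3), where C="\<bar>c\<bar>"]) (smt (verit))
  ultimately have "\<bar>\<integral>y. f y \<partial>\<mu>\<bar> \<le> (\<integral>y. c * remainder_weight \<rho> y \<partial>\<mu>)"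
    using assms(4) by (intro integral_abs_bound_integral) auto
  then show ?thesis by simp
qed

lemma integral_tendsto_linear_growth:
  assumes \<nu>: "\<And>n. \<nu> n \<in> \<Theta>" and \<mu>: "\<mu> \<in> \<Theta>" and conv: "weak_conv_m \<nu> \<mu>"
    and f: "continuous_on UNIV f" "\<And>y. \<bar>f y\<bar> \<le> C * (1 + \<bar>y\<bar>)"
  shows "(\<lambda>n. \<integral>y. f y \<partial>\<nu> n) \<longlonglongrightarrow> (\<integral>y. f y \<partial>\<mu>)"
proof (rule tendsto_abs_le_epsI[where c="8 * C + 1"])
  fix e :: real assume e: "e > 0"
  obtain N where N: "N \<ge> 1" and tail: "\<And>\<kappa>. \<kappa> \<in> \<Theta> \<Longrightarrow>
      integrable \<kappa> (\<lambda>y. \<bar>y\<bar> * indicator {z. \<bar>z\<bar> > N} y) \<and>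
      (\<integral>y. \<bar>y\<bar> * indicator {z. \<bar>z\<bar> > N} y \<partial>\<kappa>) \<le> e"
    using tail_integral_small[OF e] by auto
  have C: "0 \<le> C" using f(2)[of 0] by simp
  define fN where "fN y = f (max (- N) (min N y))" for y
  have fN_cont: "continuous_on UNIV fN"
    unfolding fN_def by (rule continuous_on_compose2[OF f(1)]) (auto intro!: continuous_intros)
  have f_meas: "f \<in> borel_measurable borel" and fN_meas: "fN \<in> borel_measurable borel"
    using f(1) fN_cont by (auto intro: borel_measurable_continuous_onI)
  have fN_bound: "\<bar>fN y\<bar> \<le> C * (1 + N)" for y
  proof -
    have "C * (1 + \<bar>max (- N) (min N y)\<bar>) \<le> C * (1 + N)"
      using abs_clamp_le(1)[of N y] N C by (intro mult_left_mono) auto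
    then show ?thesis using f(2)[of "max (- N) (min N y)"] unfolding fN_def by linarith
  qed
  have approx: "\<bar>(\<integral>y. f y \<partial>\<kappa>) - (\<integral>y. fN y \<partial>\<kappa>)\<bar> \<le> 4 * C * e" if \<kappa>: "\<kappa> \<in> \<Theta>" for \<kappa>
  proof -
    have "\<bar>fN y\<bar> \<le> C * (1 + N) * (1 + \<bar>y\<bar>)" for y
      using fN_bound[of y] mult_left_mono[of 1 "1 + \<bar>y\<bar>" "C * (1 + N)"] C N by simp
    then have fN_int: "integrable \<kappa> fN" by (rule integrable_linear_growth[OF \<kappa> fN_meas])
    have f_int: "integrable \<kappa> f" by (rule integrable_linear_growth[OF \<kappa> f_meas f(2)])
    have "\<bar>\<integral>y. f y - fN y \<partial>\<kappa>\<bar> \<le> (\<integral>y. 4 * C * (\<bar>y\<bar> * indicator {z. \<bar>z\<bar> > N} y) \<partial>\<kappa>)"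
      using truncation_error[OF f(2) N] tail[OF \<kappa>] f_int fN_int unfolding fN_def[symmetric]
      by (intro integral_abs_bound_integral Bochner_Integration.integrable_diff) auto
    also have "\<dots> \<le> 4 * C * e" using tail[OF \<kappa>] C by (simp add: mult_left_mono)
    finally show ?thesis using f_int fN_int by simp
  qed
  have "(\<lambda>n. \<integral>y. fN y \<partial>\<nu> n) \<longlonglongrightarrow> (\<integral>y. fN y \<partial>\<mu>)"
    using fN_cont fN_bound[unfolded real_norm_def[symmetric]]
    by (intro weak_conv_imp_integral_bdd_continuous_conv[OF real_distribution_member[OF \<nu>]
          real_distribution_member[OF \<mu>] conv]) (auto simp: continuous_on_eq_continuous_at)
  then have "eventually (\<lambda>n. \<bar>(\<integral>y. fN y \<partial>\<nu> n) - (\<integral>y. fN y \<partial>\<mu>)\<bar> < e) sequentially"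
    using e by (auto simp: tendsto_iff dist_real_def)
  then show "eventually (\<lambda>n. \<bar>(\<integral>y. f y \<partial>\<nu> n) - (\<integral>y. f y \<partial>\<mu>)\<bar> \<le> (8 * C + 1) * e) sequentially"
  proof eventually_elim
    case (elim n)
    moreover have "(8 * C + 1) * e = 4 * C * e + e + 4 * C * e" by (simp add: algebra_simps)
    ultimately show ?case using approx[OF \<nu>[of n]] approx[OF \<mu>]
      unfolding abs_le_iff abs_less_iff by linarith
  qed
qed

lemma uniform_integral_deriv:
  assumes "\<And>a. \<Phi> a \<in> borel_measurable borel" "\<And>a. \<Psi> a \<in> borel_measurable borel"
    and "\<And>\<mu> a. \<mu> \<in> \<Theta> \<Longrightarrow> integrable \<mu> (\<Phi> a)" "\<And>\<mu> a. \<mu> \<in> \<Theta> \<Longrightarrow> integrable \<mu> (\<Psi> a)"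
    and "\<And>a a' y. \<bar>\<Phi> a' y - \<Phi> a y - (a' - a) * \<Psi> a y\<bar> \<le> A * \<bar>a' - a\<bar> * remainder_weight \<bar>a' - a\<bar> y"
    and "0 \<le> A" "e > 0"
  shows "\<exists>d>0. \<forall>\<mu>\<in>\<Theta>. \<forall>s s'. \<bar>s' - s\<bar> < d \<longrightarrow>
    \<bar>(\<integral>y. \<Phi> s' y \<partial>\<mu>) - (\<integral>y. \<Phi> s y \<partial>\<mu>) - (s' - s) * (\<integral>y. \<Psi> s y \<partial>\<mu>)\<bar> \<le> e * \<bar>s' - s\<bar>"
proof -
  obtain \<eta> where \<eta>: "\<eta> > 0" and small: "\<And>\<rho> \<mu>. 0 \<le> \<rho> \<Longrightarrow> \<rho> \<le> \<eta> \<Longrightarrow> \<mu> \<in> \<Theta> \<Longrightarrow>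
      (\<integral>y. remainder_weight \<rho> y \<partial>\<mu>) \<le> e / (A + 1)"
    using remainder_weight_integral_small[of "e / (A + 1)"] assms(6,7) by auto
  have "\<bar>(\<integral>y. \<Phi> s' y \<partial>\<mu>) - (\<integral>y. \<Phi> s y \<partial>\<mu>) - (s' - s) * (\<integral>y. \<Psi> s y \<partial>\<mu>)\<bar> \<le> e * \<bar>s' - s\<bar>"
    if \<mu>: "\<mu> \<in> \<Theta>" and d: "\<bar>s' - s\<bar> < \<eta>" for \<mu> s s'
  proof -
    have "(\<integral>y. \<Phi> s' y \<partial>\<mu>) - (\<integral>y. \<Phi> s y \<partial>\<mu>) - (s' - s) * (\<integral>y. \<Psi> s y \<partial>\<mu>) =
        (\<integral>y. \<Phi> s' y - \<Phi> s y - (s' - s) * \<Psi> s y \<partial>\<mu>)"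
      using assms(3,4)[OF \<mu>] by simp
    also have "\<bar>\<dots>\<bar> \<le> A * \<bar>s' - s\<bar> * (\<integral>y. remainder_weight \<bar>s' - s\<bar> y \<partial>\<mu>)"
      using assms(1,2,5) by (intro abs_integral_le_remainder_weight[OF \<mu>]) auto
    also have "\<dots> \<le> A * \<bar>s' - s\<bar> * (e / (A + 1))"
      using small[OF _ _ \<mu>, of "\<bar>s' - s\<bar>"] d assms(6) by (intro mult_left_mono) auto
    also have "\<dots> \<le> e * \<bar>s' - s\<bar>"
      using assms(6,7) by (simp add: field_simps mult_right_mono)
    finally show ?thesis .
  qed
  with \<eta> show ?thesis by blast
qed

lemma uniform_integral_equicont:
  assumes "\<And>a. \<Psi> a \<in> borel_measurable borel" "\<And>\<mu> a. \<mu> \<in> \<Theta> \<Longrightarrow> integrable \<mu> (\<Psi> a)"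
    and "\<And>a a' y. \<bar>\<Psi> a' y - \<Psi> a y\<bar> \<le> A * remainder_weight \<bar>a' - a\<bar> y"
    and "0 \<le> A" "e > 0"
  shows "\<exists>d>0. \<forall>\<mu>\<in>\<Theta>. \<forall>s s'. \<bar>s' - s\<bar> < d \<longrightarrow> \<bar>(\<integral>y. \<Psi> s' y \<partial>\<mu>) - (\<integral>y. \<Psi> s y \<partial>\<mu>)\<bar> \<le> e"
proof -
  obtain \<eta> where \<eta>: "\<eta> > 0" and small: "\<And>\<rho> \<mu>. 0 \<le> \<rho> \<Longrightarrow> \<rho> \<le> \<eta> \<Longrightarrow> \<mu> \<in> \<Theta> \<Longrightarrow>
      (\<integral>y. remainder_weight \<rho> y \<partial>\<mu>) \<le> e / (A + 1)"
    using remainder_weight_integral_small[of "e / (A + 1)"] assms(4,5) by auto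
  have "\<bar>(\<integral>y. \<Psi> s' y \<partial>\<mu>) - (\<integral>y. \<Psi> s y \<partial>\<mu>)\<bar> \<le> e"
    if \<mu>: "\<mu> \<in> \<Theta>" and d: "\<bar>s' - s\<bar> < \<eta>" for \<mu> s s'
  proof -
    have "\<bar>(\<integral>y. \<Psi> s' y \<partial>\<mu>) - (\<integral>y. \<Psi> s y \<partial>\<mu>)\<bar> = \<bar>\<integral>y. \<Psi> s' y - \<Psi> s y \<partial>\<mu>\<bar>"
      using assms(2)[OF \<mu>] by simp
    also have "\<dots> \<le> A * (\<integral>y. remainder_weight \<bar>s' - s\<bar> y \<partial>\<mu>)"
      using assms(1,3) by (intro abs_integral_le_remainder_weight[OF \<mu>]) auto
    also have "\<dots> \<le> A * (e / (A + 1))"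
      using small[OF _ _ \<mu>, of "\<bar>s' - s\<bar>"] d assms(4) by (intro mult_left_mono) auto
    also have "\<dots> \<le> e"
      using assms(4,5) by (simp add: field_simps)
    finally show ?thesis .
  qed
  with \<eta> show ?thesis by blast
qed

lemma danskin_integral_family:
  fixes \<Phi> \<Psi> :: "real \<Rightarrow> real \<Rightarrow> real" and g :: "real \<Rightarrow> real"
  assumes nonempty: "\<Theta> \<noteq> {}" and compact: "weakly_compact_pm \<Theta>"
    and cont: "\<And>a. continuous_on UNIV (\<Phi> a)" "\<And>a. continuous_on UNIV (\<Psi> a)"
    and growth: "\<And>a y. \<bar>\<Phi> a y\<bar> \<le> C * (1 + \<bar>y\<bar>)" "\<And>a y. \<bar>\<Psi> a y\<bar> \<le> C * (1 + \<bar>y\<bar>)"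
    and taylor: "\<And>a a' y. \<bar>\<Phi> a' y - \<Phi> a y - (a' - a) * \<Psi> a y\<bar>
        \<le> A * \<bar>a' - a\<bar> * remainder_weight \<bar>a' - a\<bar> y"
    and equi: "\<And>a a' y. \<bar>\<Psi> a' y - \<Psi> a y\<bar> \<le> A * remainder_weight \<bar>a' - a\<bar> y"
    and A: "0 \<le> A"
    and g: "\<And>a. g a = (SUP \<mu>\<in>\<Theta>. \<integral>y. \<Phi> a y \<partial>\<mu>)"
  shows "danskin \<Theta> (\<lambda>\<mu> a. \<integral>y. \<Phi> a y \<partial>\<mu>) (\<lambda>\<mu> a. \<integral>y. \<Psi> a y \<partial>\<mu>) g"
proof
  have meas: "\<Phi> a \<in> borel_measurable borel" "\<Psi> a \<in> borel_measurable borel" for a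
    using cont by (auto intro: borel_measurable_continuous_onI)
  note int = integrable_linear_growth[OF _ meas(1) growth(1)] integrable_linear_growth[OF _ meas(2) growth(2)]
  show "\<Theta> \<noteq> {}" by (rule nonempty)
  show "bdd_above ((\<lambda>\<mu>. \<integral>y. \<Phi> s y \<partial>\<mu>) ` \<Theta>)" for s
  proof -
    obtain B where "\<And>\<mu>. \<mu> \<in> \<Theta> \<Longrightarrow> \<bar>\<integral>y. \<Phi> s y \<partial>\<mu>\<bar> \<le> B"
      using integral_linear_growth_bounded[OF meas(1) growth(1)] by blast
    then show ?thesis by (intro bdd_aboveI2[of _ _ B]) (simp add: abs_le_iff)
  qed
  show "\<exists>B. \<forall>\<mu>\<in>\<Theta>. \<bar>\<integral>y. \<Psi> s y \<partial>\<mu>\<bar> \<le> B" for s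
    by (rule integral_linear_growth_bounded[OF meas(2) growth(2)])
  show "\<exists>d>0. \<forall>\<mu>\<in>\<Theta>. \<forall>s s'. \<bar>s' - s\<bar> < d \<longrightarrow>
      \<bar>(\<integral>y. \<Phi> s' y \<partial>\<mu>) - (\<integral>y. \<Phi> s y \<partial>\<mu>) - (s' - s) * (\<integral>y. \<Psi> s y \<partial>\<mu>)\<bar> \<le> e * \<bar>s' - s\<bar>"
    if "e > 0" for e
    by (rule uniform_integral_deriv[OF meas int taylor A that])
  show "\<exists>d>0. \<forall>\<mu>\<in>\<Theta>. \<forall>s s'. \<bar>s' - s\<bar> < d \<longrightarrow> \<bar>(\<integral>y. \<Psi> s' y \<partial>\<mu>) - (\<integral>y. \<Psi> s y \<partial>\<mu>)\<bar> \<le> e"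
    if "e > 0" for e
    by (rule uniform_integral_equicont[OF meas(2) int(2) equi A that])
  show "\<exists>(r :: nat \<Rightarrow> nat) \<mu>. strict_mono r \<and> \<mu> \<in> \<Theta> \<and>
      (\<lambda>n. \<integral>y. \<Phi> s y \<partial>\<mu>s (r n)) \<longlonglongrightarrow> (\<integral>y. \<Phi> s y \<partial>\<mu>) \<and>
      (\<lambda>n. \<integral>y. \<Psi> s y \<partial>\<mu>s (r n)) \<longlonglongrightarrow> (\<integral>y. \<Psi> s y \<partial>\<mu>)"
    if \<mu>s: "\<And>n. \<mu>s n \<in> \<Theta>" for \<mu>s :: "nat \<Rightarrow> real measure" and s
  proof -
    obtain r \<mu> where r: "strict_mono (r :: nat \<Rightarrow> nat)" and \<mu>: "\<mu> \<in> \<Theta>"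
      and conv: "weak_conv_m (\<mu>s \<circ> r) \<mu>"
      using compact \<mu>s unfolding weakly_compact_pm_def by blast
    have "(\<mu>s \<circ> r) n \<in> \<Theta>" for n using \<mu>s by simp
    from integral_tendsto_linear_growth[OF this \<mu> conv cont(1) growth(1)]
      integral_tendsto_linear_growth[OF this \<mu> conv cont(2) growth(2)] r \<mu>
    show ?thesis by auto
  qed
  show "g s = (SUP \<mu>\<in>\<Theta>. \<integral>y. \<Phi> s y \<partial>\<mu>)" for s by (rule g)
qed

lemma danskin_affine_family:
  fixes \<phi> \<phi>' \<phi>'' \<alpha> \<beta> g :: "real \<Rightarrow> real"
  assumes nonempty: "\<Theta> \<noteq> {}" and compact: "weakly_compact_pm \<Theta>"
    and \<phi>: "\<And>z. (\<phi> has_real_derivative \<phi>' z) (at z)" "\<And>z. (\<phi>' has_real_derivative \<phi>'' z) (at z)"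
    and bounded: "bounded (range \<phi>)" "bounded (range \<phi>')" "bounded (range \<phi>'')"
    and \<alpha>: "continuous_on UNIV \<alpha>" and \<beta>: "continuous_on UNIV \<beta>" "\<And>y. \<bar>\<beta> y\<bar> \<le> 1 + \<bar>y\<bar>"
    and g: "\<And>a. g a = (SUP \<mu>\<in>\<Theta>. \<integral>y. \<phi> (\<alpha> y + a * \<beta> y) \<partial>\<mu>)"
  shows "danskin \<Theta> (\<lambda>\<mu> a. \<integral>y. \<phi> (\<alpha> y + a * \<beta> y) \<partial>\<mu>)
      (\<lambda>\<mu> a. \<integral>y. \<beta> y * \<phi>' (\<alpha> y + a * \<beta> y) \<partial>\<mu>) g"
proof -
  obtain M0 M1 M2 where M0: "\<And>z. \<bar>\<phi> z\<bar> \<le> M0" and M1: "\<And>z. \<bar>\<phi>' z\<bar> \<le> M1"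
    and M2: "\<And>z. \<bar>\<phi>'' z\<bar> \<le> M2"
    using bounded by (auto simp: bounded_iff)
  have M: "0 \<le> M0" "0 \<le> M1" "0 \<le> M2" using M0[of 0] M1[of 0] M2[of 0] by linarith+
  have A: "0 \<le> 2 * M1 + M2" using M by simp
  have modulus: "\<bar>\<phi>' p - \<phi>' q\<bar> \<le> (2 * M1 + M2) * min 1 \<bar>p - q\<bar>" for p q
    by (rule bounded_lipschitz_modulus[OF \<phi>(2) M1 M2])
  have \<phi>_cont: "continuous_on UNIV \<phi>" "continuous_on UNIV \<phi>'"
    using \<phi> by (auto intro: continuous_at_imp_continuous_on DERIV_isCont)
  have "continuous_on UNIV (\<lambda>y. \<alpha> y + a * \<beta> y)" for a
    using \<alpha> \<beta>(1) by (intro continuous_intros)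
  from continuous_on_compose2[OF \<phi>_cont(1) this] continuous_on_compose2[OF \<phi>_cont(2) this]
  have cont: "continuous_on UNIV (\<lambda>y. \<phi> (\<alpha> y + a * \<beta> y))"
    "continuous_on UNIV (\<lambda>y. \<beta> y * \<phi>' (\<alpha> y + a * \<beta> y))" for a
    using \<beta>(1) by (auto intro!: continuous_intros)
  have "\<bar>\<phi> (\<alpha> y + a * \<beta> y)\<bar> \<le> (M0 + M1) * (1 + \<bar>y\<bar>)" for a y
  proof -
    have "M0 \<le> (M0 + M1) * 1" using M by simp
    also have "\<dots> \<le> (M0 + M1) * (1 + \<bar>y\<bar>)" using M by (intro mult_left_mono) auto
    finally show ?thesis using M0[of "\<alpha> y + a * \<beta> y"] by (rule order_trans[rotated])
  qed
  moreover have "\<bar>\<beta> y * \<phi>' (\<alpha> y + a * \<beta> y)\<bar> \<le> (M0 + M1) * (1 + \<bar>y\<bar>)" for a y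
  proof -
    have "\<bar>\<beta> y\<bar> * \<bar>\<phi>' (\<alpha> y + a * \<beta> y)\<bar> \<le> (1 + \<bar>y\<bar>) * (M0 + M1)"
      using \<beta>(2)[of y] M1[of "\<alpha> y + a * \<beta> y"] M by (intro mult_mono) auto
    then show ?thesis by (simp add: abs_mult mult.commute)
  qed
  ultimately show ?thesis
    using affine_taylor_remainder[OF \<phi>(1) modulus A \<beta>(2)] affine_modulus[OF modulus A \<beta>(2)]
    by (intro danskin_integral_family[OF nonempty compact cont _ _ _ _ A g])
qed

end

theorem lemma2p1:
  fixes \<Theta> :: "real measure set"
    and \<phi> \<phi>' \<phi>'' :: "real \<Rightarrow> real"
    and u :: "real \<Rightarrow> real \<Rightarrow> real"
  assumes prob: "\<And>\<mu>. \<mu> \<in> \<Theta> \<Longrightarrow> prob_space \<mu> \<and> sets \<mu> = sets borel"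
    and nonempty: "\<Theta> \<noteq> {}"
    and wcompact: "weakly_compact_pm \<Theta>"
    and unif_int: "((\<lambda>N. SUP \<mu>\<in>\<Theta>. \<integral>\<^sup>+ y. ennreal (\<bar>y\<bar> * indicator {z. \<bar>z\<bar> > N} y) \<partial>\<mu>)
                     \<longlongrightarrow> 0) at_top"
    and d1: "\<And>x. (\<phi> has_real_derivative \<phi>' x) (at x)"
    and d2: "\<And>x. (\<phi>' has_real_derivative \<phi>'' x) (at x)"
    and cont2: "continuous_on UNIV \<phi>''"
    and bdd: "bounded (range \<phi>)" "bounded (range \<phi>')" "bounded (range \<phi>'')"
    and u_def: "\<And>t x. u t x = (SUP \<mu>\<in>\<Theta>. \<integral>y. \<phi> (x + sqrt t * y) \<partial>\<mu>)"
  shows "\<forall>t>0. \<forall>x.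
     let \<Theta>tx = {\<mu>\<in>\<Theta>. (\<integral>y. \<phi> (x + sqrt t * y) \<partial>\<mu>) = u t x} in
     ((\<lambda>h. (u (t + h) x - u t x) / h) \<longlongrightarrow>
        (SUP \<mu>\<in>\<Theta>tx. \<integral>y. y / (2 * sqrt t) * \<phi>' (x + sqrt t * y) \<partial>\<mu>)) (at_right 0) \<and>
     ((\<lambda>h. (u (t - h) x - u t x) / (- h)) \<longlongrightarrow>
        (INF \<mu>\<in>\<Theta>tx. \<integral>y. y / (2 * sqrt t) * \<phi>' (x + sqrt t * y) \<partial>\<mu>)) (at_right 0) \<and>
     ((\<lambda>h. (u t (x + h) - u t x) / h) \<longlongrightarrow>
        (SUP \<mu>\<in>\<Theta>tx. \<integral>y. \<phi>' (x + sqrt t * y) \<partial>\<mu>)) (at_right 0) \<and>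
     ((\<lambda>h. (u t (x - h) - u t x) / (- h)) \<longlongrightarrow>
        (INF \<mu>\<in>\<Theta>tx. \<integral>y. \<phi>' (x + sqrt t * y) \<partial>\<mu>)) (at_right 0) \<and>
     ((\<lambda>\<delta>. rderiv (\<lambda>s. u s x) (t + \<delta>)) \<longlongrightarrow> rderiv (\<lambda>s. u s x) t) (at_right 0) \<and>
     ((\<lambda>\<delta>. lderiv (\<lambda>s. u s x) (t + \<delta>)) \<longlongrightarrow> rderiv (\<lambda>s. u s x) t) (at_right 0) \<and>
     ((\<lambda>\<delta>. rderiv (\<lambda>s. u s x) (t - \<delta>)) \<longlongrightarrow> lderiv (\<lambda>s. u s x) t) (at_right 0) \<and>
     ((\<lambda>\<delta>. lderiv (\<lambda>s. u s x) (t - \<delta>)) \<longlongrightarrow> lderiv (\<lambda>s. u s x) t) (at_right 0) \<and>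
     ((\<lambda>\<delta>. rderiv (\<lambda>z. u t z) (x + \<delta>)) \<longlongrightarrow> rderiv (\<lambda>z. u t z) x) (at_right 0) \<and>
     ((\<lambda>\<delta>. lderiv (\<lambda>z. u t z) (x + \<delta>)) \<longlongrightarrow> rderiv (\<lambda>z. u t z) x) (at_right 0) \<and>
     ((\<lambda>\<delta>. rderiv (\<lambda>z. u t z) (x - \<delta>)) \<longlongrightarrow> lderiv (\<lambda>z. u t z) x) (at_right 0) \<and>
     ((\<lambda>\<delta>. lderiv (\<lambda>z. u t z) (x - \<delta>)) \<longlongrightarrow> lderiv (\<lambda>z. u t z) x) (at_right 0)"
  apply (intro allI impI)
  subgoal premises t for t x
  proof -
    interpret unif_integrable_measures \<Theta> using prob unif_int by unfold_locales
    define v where "v a = (SUP \<mu>\<in>\<Theta>. \<integral>y. \<phi> (x + a * y) \<partial>\<mu>)" for a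
    interpret T: danskin \<Theta> "\<lambda>\<mu> a. \<integral>y. \<phi> (x + a * y) \<partial>\<mu>" "\<lambda>\<mu> a. \<integral>y. y * \<phi>' (x + a * y) \<partial>\<mu>" v
      using danskin_affine_family[OF nonempty wcompact d1 d2 bdd, of "\<lambda>y. x" "\<lambda>y. y" v]
      by (simp add: v_def)
    interpret X: danskin \<Theta> "\<lambda>\<mu> z. \<integral>y. \<phi> (z + sqrt t * y) \<partial>\<mu>" "\<lambda>\<mu> z. \<integral>y. \<phi>' (z + sqrt t * y) \<partial>\<mu>" "u t"
      using danskin_affine_family[OF nonempty wcompact d1 d2 bdd, of "\<lambda>y. sqrt t * y" "\<lambda>y. 1" "u t"]
      by (simp add: u_def add.commute)
    have u_sqrt: "u s x = v (sqrt s)" for s by (simp add: u_def v_def)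
    have pos: "2 * sqrt t > 0" using t by simp
    note T_quotients = T.sqrt_reparam_has_derivative[OF t, unfolded has_real_derivative_at_right_iff
        has_real_derivative_at_left_iff T.upper_deriv_divide[OF pos] T.lower_deriv_divide[OF pos]]
    show ?thesis
      using T_quotients T.sqrt_reparam_derivative_limits[OF t]
        X.right_quotient_tendsto[of x] X.left_quotient_tendsto[of x] X.one_sided_derivative_limits[of x]
      unfolding Let_def u_sqrt T.maximizers_def X.upper_deriv_def X.lower_deriv_def X.maximizers_def
      by simp
  qed
  done

end
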